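(* Let $S$ be a non-empty poset and $(\mathcal{L},\rightharpoonup)=(L,\wedge,\vee,0,1)$ a complete lattice with an $S$-action. (1) $Spec^c(\mathcal{L})=Spec^s(\mathcal{L}^0)$. (2) $Spec^c(\mathcal{L}^0)=Spec^s(\mathcal{L}^* )$. (3) If $x\in L\setminus\{1\}$ is prime, then $Spec^f(\mathcal{L}/x)=(L/x)\setminus\{x/x\}$. (4) Assume additionally that $s\rightharpoonup(y\vee z)=(s\rightharpoonup y)\vee(s\rightharpoonup z)$ for all $s\in S$, $y,z\in L$. Then $x\in L\setminus\{1\}$ is prime if and only if $Spec^f(\mathcal{L}/x)=(L/x)\setminus\{x/x\}$.
   Context: An $S$-action on a lattice $(L,\wedge,\vee)$ is a map $\rightharpoonup:S\times L\to L$ such that $s_1\leq s_2\Rightarrow s_1\rightharpoonup x\leq s_2\rightharpoonup x$; $x\leq y\Rightarrow s\rightharpoonup x\leq s\rightharpoonup y$; and $s\rightharpoonup x\leq x$. For a bounded lattice $\mathcal{L}$ with $S$-action, the dual lattice $\mathcal{L}^0=(L,\vee,\wedge,1,0)$ (order reversed, bottom $1$, top $0$) carries the action of the dual poset $S^0=(S,\geq)$ given by $s\rightharpoonup^0 x=(s\rightharpoonup 1)\vee x$; $\mathcal{L}^*$ denotes $\mathcal{L}$ with the $S$-action $s\rightharpoonup^* x=(s\rightharpoonup 1)\wedge x$. For a bounded lattice with action (bottom $0$, top $1$): an element $x\neq 1$ is prime iff for all $y\in L$, $s\in S$: $s\rightharpoonup y\leq x$ implies $s\rightharpoonup 1\leq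 x$ or $y\leq x$; $x\neq 1$ is coprime iff for all $s\in S$: $s\rightharpoonup 1\leq x$ or $(s\rightharpoonup 1)\vee x=1$; $x\neq 0$ is second iff for all $s$: $s\rightharpoonup x=x$ or $s\rightharpoonup x=0$; $x\neq 0$ is first iff for all $y\in L$, $s\in S$: if $s\rightharpoonup y=0$ and $y\leq x$ then $s\rightharpoonup x=0$ or $y=0$. $Spec^c$, $Spec^s$, $Spec^f$ denote the sets of coprime, second, first elements respectively (computed with respect to the lattice's own order, bounds and action). Quotient lattice: for $x\in L$ and $y,z\geq x$, set $y\sim z$ iff for every $y'\leq y$ there is $z'\leq z$ with $y'\vee x=z'\vee x$ and for every $z'\leq z$ there is $y'\leq y$ with $y'\vee x=z'\vee x$; $y/x$ is the class of $y$, $L/x=\{y/x: y\geq x\}$, ordered by $y/x\leq^q z/x$ iff for every $y'\leq y$ there is $z'\leq z$ with $y'\vee x=z'\vee x$, with $y/x\wedge^q z/x=(y\wedge z)/x$, $y/x\vee^q z/x=(y\vee z)/x$; its bottom is $x/x$ and top $1/x$. $\mathcal{L}/x$ carries the $S$-action $s\rightharpoonup^q y/x=((s\rightharpoonup y)\vee x)/x$. *)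

theory Defs
  imports Main
begin

definition S_action :: "('b::order \<Rightarrow> 'a::lattice \<Rightarrow> 'a) \<Rightarrow> bool" where
  "S_action act \<longleftrightarrow>
     (\<forall>s1 s2 x. s1 \<le> s2 \<longrightarrow> act s1 x \<le> act s2 x) \<and>
     (\<forall>s x y. x \<le> y \<longrightarrow> act s x \<le> act s y) \<and>
     (\<forall>s x. act s x \<le> x)"

text \<open>Generic notions for a bounded lattice with action, given by carrier C,
  order le, join sup, bottom bot, tp tp and action act (s ranges over all of S).\<close>

definition is_prime_gen ::
  "'c set \<Rightarrow> ('c \<Rightarrow> 'c \<Rightarrow> bool) \<Rightarrow> 'c \<Rightarrow> ('b \<Rightarrow> 'c \<Rightarrow> 'c) \<Rightarrow> 'c \<Rightarrow> bool" where
  "is_prime_gen C le tp act x \<longleftrightarrow> x \<in> C \<and> x \<noteq> tp \<and>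
     (\<forall>y\<in>C. \<forall>s. le (act s y) x \<longrightarrow> le (act s tp) x \<or> le y x)"

definition Spec_c ::
  "'c set \<Rightarrow> ('c \<Rightarrow> 'c \<Rightarrow> bool) \<Rightarrow> ('c \<Rightarrow> 'c \<Rightarrow> 'c) \<Rightarrow> 'c \<Rightarrow> ('b \<Rightarrow> 'c \<Rightarrow> 'c) \<Rightarrow> 'c set" where
  "Spec_c C le jn tp act = {x \<in> C. x \<noteq> tp \<and>
     (\<forall>s. le (act s tp) x \<or> jn (act s tp) x = tp)}"

definition Spec_s :: "'c set \<Rightarrow> 'c \<Rightarrow> ('b \<Rightarrow> 'c \<Rightarrow> 'c) \<Rightarrow> 'c set" where
  "Spec_s C bt act = {x \<in> C. x \<noteq> bt \<and> (\<forall>s. act s x = x \<or> act s x = bt)}"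

definition Spec_f ::
  "'c set \<Rightarrow> ('c \<Rightarrow> 'c \<Rightarrow> bool) \<Rightarrow> 'c \<Rightarrow> ('b \<Rightarrow> 'c \<Rightarrow> 'c) \<Rightarrow> 'c set" where
  "Spec_f C le bt act = {x \<in> C. x \<noteq> bt \<and>
     (\<forall>y\<in>C. \<forall>s. act s y = bt \<and> le y x \<longrightarrow> act s x = bt \<or> y = bt)}"

text \<open>Dual action on L^0 and the action of L^*.\<close>
definition dual_act :: "('b \<Rightarrow> 'a::bounded_lattice \<Rightarrow> 'a) \<Rightarrow> 'b \<Rightarrow> 'a \<Rightarrow> 'a" where
  "dual_act act s x = sup (act s top) x"

definition star_act :: "('b \<Rightarrow> 'a::bounded_lattice \<Rightarrow> 'a) \<Rightarrow> 'b \<Rightarrow> 'a \<Rightarrow> 'a" where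
  "star_act act s x = inf (act s top) x"

text \<open>Quotient lattice L/x; elements are equivalence classes (sets).\<close>
definition qle :: "'a::lattice \<Rightarrow> 'a \<Rightarrow> 'a \<Rightarrow> bool" where
  "qle x y z \<longleftrightarrow> (\<forall>y'. y' \<le> y \<longrightarrow> (\<exists>z'. z' \<le> z \<and> sup y' x = sup z' x))"

definition qequiv :: "'a::lattice \<Rightarrow> 'a \<Rightarrow> 'a \<Rightarrow> bool" where
  "qequiv x y z \<longleftrightarrow> qle x y z \<and> qle x z y"

definition qclass :: "'a::lattice \<Rightarrow> 'a \<Rightarrow> 'a set" where
  "qclass x y = {z. x \<le> z \<and> qequiv x y z}"

definition quot_carrier :: "'a::lattice \<Rightarrow> 'a set set" where
  "quot_carrier x = {qclass x y | y. x \<le> y}"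

definition quot_le :: "'a::lattice \<Rightarrow> 'a set \<Rightarrow> 'a set \<Rightarrow> bool" where
  "quot_le x A B \<longleftrightarrow> (\<exists>y z. x \<le> y \<and> x \<le> z \<and> A = qclass x y \<and> B = qclass x z \<and> qle x y z)"

definition qrep :: "'a::lattice \<Rightarrow> 'a set \<Rightarrow> 'a" where
  "qrep x A = (SOME y. x \<le> y \<and> A = qclass x y)"

definition quot_act :: "('b \<Rightarrow> 'a::lattice \<Rightarrow> 'a) \<Rightarrow> 'a \<Rightarrow> 'b \<Rightarrow> 'a set \<Rightarrow> 'a set" where
  "quot_act act x s A = qclass x (sup (act s (qrep x A)) x)"

end

theory Submission
  imports Defs
begin

text \<open>The quotient order is trivial: every class of L/x is a singleton, so L/x is the
  interval [x, 1] and x/x is its bottom. Under this identification, first elements of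
  L/x are those y \<ge> x for which act s z \<le> x with x \<le> z \<le> y forces act s y \<le> x or
  z = x. For prime x this holds since act s y \<le> act s 1 \<le> x or z \<le> x. Conversely,
  taking y = 1 and z = y' \<squnion> x recovers primality of x, provided the action distributes
  over joins so that act s y' \<le> x gives act s (y' \<squnion> x) \<le> x.\<close>

lemma qle_iff_le:
  fixes x y z :: "'a::lattice"
  assumes "x \<le> y" "x \<le> z"
  shows "qle x y z \<longleftrightarrow> y \<le> z"
proof
  assume "qle x y z"
  then obtain z' where "z' \<le> z" "sup y x = sup z' x" unfolding qle_def by blast
  then show "y \<le> z" using assms by (metis le_sup_iff sup.absorb1 sup.cobounded1 order_trans)
next
  assume "y \<le> z"
  then show "qle x y z"
    using assms unfolding qle_def by (metis le_sup_iff sup.absorb1 sup.cobounded1 order_trans)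
qed

lemma qclass_eq_singleton:
  fixes x y :: "'a::lattice"
  assumes "x \<le> y"
  shows "qclass x y = {y}"
  using assms unfolding qclass_def qequiv_def by (auto simp: qle_iff_le)

lemma quot_carrier_eq: "quot_carrier (x::'a::lattice) = {{y} | y. x \<le> y}"
  unfolding quot_carrier_def by (metis qclass_eq_singleton)

lemma qrep_singleton:
  fixes x y :: "'a::lattice"
  assumes "x \<le> y"
  shows "qrep x {y} = y"
proof -
  have "x \<le> y \<and> {y} = qclass x y" using assms qclass_eq_singleton by auto
  then have "x \<le> qrep x {y} \<and> {y} = qclass x (qrep x {y})"
    unfolding qrep_def by (rule someI)
  then show ?thesis using qclass_eq_singleton by fastforce
qed

lemma quot_le_singleton_iff:
  fixes x y z :: "'a::lattice"
  assumes "x \<le> y" "x \<le> z"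
  shows "quot_le x {y} {z} \<longleftrightarrow> y \<le> z"
proof
  assume "quot_le x {y} {z}"
  then show "y \<le> z" unfolding quot_le_def by (auto simp: qclass_eq_singleton qle_iff_le)
next
  assume "y \<le> z"
  then show "quot_le x {y} {z}" unfolding quot_le_def using assms
    by (intro exI[of _ y] exI[of _ z]) (simp add: qclass_eq_singleton qle_iff_le)
qed

lemma quot_act_singleton:
  fixes x y :: "'a::lattice"
  assumes "x \<le> y"
  shows "quot_act act x s {y} = {sup (act s y) x}"
  using assms unfolding quot_act_def by (simp add: qrep_singleton qclass_eq_singleton)

lemma singleton_mem_Spec_f_quot_iff:
  fixes x y :: "'a::lattice"
  assumes "x \<le> y"
  shows "{y} \<in> Spec_f (quot_carrier x) (quot_le x) (qclass x x) (quot_act act x) \<longleftrightarrow>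
    y \<noteq> x \<and> (\<forall>z s. x \<le> z \<longrightarrow> z \<le> y \<longrightarrow> act s z \<le> x \<longrightarrow> act s y \<le> x \<or> z = x)"
proof -
  have quot_bot: "quot_act act x s {z} = {x} \<longleftrightarrow> act s z \<le> x" if "x \<le> z" for s z
    using that by (simp add: quot_act_singleton qclass_eq_singleton le_iff_sup)
  show ?thesis
    using assms
    by (auto simp: Spec_f_def quot_carrier_eq setcompr_eq_image qclass_eq_singleton
        quot_le_singleton_iff quot_bot)
qed

definition prime_above :: "('b \<Rightarrow> 'a::bounded_lattice \<Rightarrow> 'a) \<Rightarrow> 'a \<Rightarrow> bool" where
  "prime_above act x \<longleftrightarrow>
     (\<forall>z s. x \<le> z \<longrightarrow> act s z \<le> x \<longrightarrow> act s top \<le> x \<or> z = x)"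

lemma prime_imp_prime_above:
  fixes act :: "'b \<Rightarrow> 'a::bounded_lattice \<Rightarrow> 'a"
  assumes "is_prime_gen UNIV (\<le>) top act x"
  shows "prime_above act x"
  using assms unfolding is_prime_gen_def prime_above_def by (auto intro: antisym)

lemma prime_if_prime_above:
  fixes act :: "'b::order \<Rightarrow> 'a::bounded_lattice \<Rightarrow> 'a"
  assumes "S_action act"
    and sup_distrib: "\<forall>s y z. act s (sup y z) = sup (act s y) (act s z)"
    and "x \<noteq> top"
    and "prime_above act x"
  shows "is_prime_gen UNIV (\<le>) top act x"
  unfolding is_prime_gen_def
proof (intro conjI ballI allI impI)
  fix y s assume "act s y \<le> x"
  moreover have "act s x \<le> x" using \<open>S_action act\<close> unfolding S_action_def by simp
  ultimately have "act s (sup y x) \<le> x" using sup_distrib by simp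
  then have "act s top \<le> x \<or> sup y x = x"
    using \<open>prime_above act x\<close> unfolding prime_above_def by simp
  then show "act s top \<le> x \<or> y \<le> x" by (metis sup.orderI sup_commute)
qed (use \<open>x \<noteq> top\<close> in auto)

lemma Spec_f_quot_eq_iff_prime_above:
  fixes act :: "'b::order \<Rightarrow> 'a::bounded_lattice \<Rightarrow> 'a"
  assumes "S_action act"
  shows "Spec_f (quot_carrier x) (quot_le x) (qclass x x) (quot_act act x)
      = quot_carrier x - {qclass x x} \<longleftrightarrow> prime_above act x"
    (is "?Spec = ?nonzero \<longleftrightarrow> _")
proof -
  have act_le_top: "act s y \<le> act s top" for s y
    using assms unfolding S_action_def by simp
  have nonzero: "?nonzero = {{y} | y. x \<le> y \<and> y \<noteq> x}"
    by (auto simp: quot_carrier_eq qclass_eq_singleton)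
  have "?Spec \<subseteq> ?nonzero"
    unfolding Spec_f_def by blast
  then have "?Spec = ?nonzero \<longleftrightarrow> (\<forall>y. x \<le> y \<longrightarrow> y \<noteq> x \<longrightarrow> {y} \<in> ?Spec)"
    unfolding nonzero by blast
  also have "\<dots> \<longleftrightarrow> prime_above act x"
    unfolding prime_above_def
  proof (intro iffI allI impI)
    fix z s
    assume all_first: "\<forall>y. x \<le> y \<longrightarrow> y \<noteq> x \<longrightarrow> {y} \<in> ?Spec"
      and "x \<le> z" "act s z \<le> x"
    show "act s top \<le> x \<or> z = x"
    proof (cases "top = x")
      case False
      then have "{top} \<in> ?Spec" using all_first by simp
      then show ?thesis
        using \<open>x \<le> z\<close> \<open>act s z \<le> x\<close> by (simp add: singleton_mem_Spec_f_quot_iff)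
    qed (use act_le_top in auto)
  next
    fix y
    assume "\<forall>z s. x \<le> z \<longrightarrow> act s z \<le> x \<longrightarrow> act s top \<le> x \<or> z = x"
      and "x \<le> y" "y \<noteq> x"
    then show "{y} \<in> ?Spec"
      by (simp add: singleton_mem_Spec_f_quot_iff) (meson act_le_top order_trans)
  qed
  finally show ?thesis .
qed

lemma Spec_c_eq_Spec_s_dual:
  fixes act :: "'b \<Rightarrow> 'a::bounded_lattice \<Rightarrow> 'a"
  shows "Spec_c UNIV (\<le>) sup top act = Spec_s UNIV top (dual_act act)"
  unfolding Spec_c_def Spec_s_def dual_act_def by (simp add: sup.absorb_iff2)

lemma Spec_c_dual_eq_Spec_s_star:
  fixes act :: "'b \<Rightarrow> 'a::bounded_lattice \<Rightarrow> 'a"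
  shows "Spec_c UNIV (\<ge>) inf bot (dual_act act) = Spec_s UNIV bot (star_act act)"
  unfolding Spec_c_def Spec_s_def dual_act_def star_act_def by (simp add: inf.absorb_iff2)

theorem mainTheorem7:
  fixes act :: "'b::order \<Rightarrow> 'a::complete_lattice \<Rightarrow> 'a"
  assumes "S_action act"
  shows
    "Spec_c UNIV (\<le>) sup top act = Spec_s UNIV top (dual_act act)
     \<and> Spec_c UNIV (\<ge>) inf bot (dual_act act) = Spec_s UNIV bot (star_act act)
     \<and> (\<forall>x. is_prime_gen UNIV (\<le>) top act x \<longrightarrow>
          Spec_f (quot_carrier x) (quot_le x) (qclass x x) (quot_act act x)
            = quot_carrier x - {qclass x x})
     \<and> ((\<forall>s y z. act s (sup y z) = sup (act s y) (act s z)) \<longrightarrow>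
          (\<forall>x. x \<noteq> top \<longrightarrow>
            (is_prime_gen UNIV (\<le>) top act x \<longleftrightarrow>
              Spec_f (quot_carrier x) (quot_le x) (qclass x x) (quot_act act x)
                = quot_carrier x - {qclass x x})))"
proof -
  note first_iff = Spec_f_quot_eq_iff_prime_above[OF assms]
  have prime_iff_first: "is_prime_gen UNIV (\<le>) top act x \<longleftrightarrow>
      Spec_f (quot_carrier x) (quot_le x) (qclass x x) (quot_act act x)
      = quot_carrier x - {qclass x x}"
    if "\<forall>s y z. act s (sup y z) = sup (act s y) (act s z)" "x \<noteq> top" for x
    unfolding first_iff using prime_imp_prime_above prime_if_prime_above[OF assms that]
    by (rule iffI)
  show ?thesis
    by (intro conjI allI impI Spec_c_eq_Spec_s_dual Spec_c_dual_eq_Spec_s_star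
        prime_iff_first) (simp_all add: first_iff prime_imp_prime_above)
qed

end
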